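(* Let $t$ be a $\lambda\mu\mathrm{T}$-term in $\to$-normal form such that $\emptyset;\Delta\vdash t:\rho$ for some $\Delta$ and $\rho$. Then either $t$ is a value, or $t\equiv\mu\alpha.[\beta]v$ for some $\mu$-variables $\alpha,\beta$ and some value $v$.
   Context: The calculus $\lambda\mu\mathrm{T}$. Types: $\rho,\sigma,\tau ::= \mathbb{N} \mid \sigma\to\tau$. Over infinite sets of $\lambda$-variables $x,y,\dots$ and $\mu$-variables $\alpha,\beta,\gamma,\dots$, terms and commands are mutually defined by $t,r,s ::= x \mid \lambda x{:}\rho.r \mid t\,s \mid \mu\alpha{:}\rho.c \mid 0 \mid \mathsf{S}\,t \mid \mathsf{nrec}_\rho\ r\ s\ t$ and $c ::= [\alpha]t$ (type annotations often omitted). $\lambda x$ binds $x$, $\mu\alpha$ binds $\alpha$; terms are considered modulo renaming of bound variables; $FV(t)$, $FCV(t)$ are the free $\lambda$- and $\mu$-variables. $t[x:=r]$ is capture-avoiding substitution. Numerals: $\underline{n} := \mathsf{S}^n 0$. Contexts: $E ::= \Box \mid E\,t \mid \mathsf{S}\,E \mid \mathsf{nrec}\ r\ s\ E$; $E[u]$ is the result of filling the hole with $u$. Structural substitution $t[\alpha:=\beta E]$ ($\beta$ a $\mu$-variable, $E$ a context) is defined homomorphically on all constructs (capture-avoiding for both kinds of variables) except $([\alpha]u)[\alpha:=\beta E] := [\beta]E[u[\alpha:=\beta E]]$ (and $([\gamma]u)[\alpha:=\beta E]:=[\gamma](u[\alpha:=\beta E])$ for $\gamma\neq\alpha$). Typing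 judgments $\Gamma;\Delta\vdash t:\rho$ and $\Gamma;\Delta\vdash c$ ($\Gamma$ assigns types to $\lambda$-variables, $\Delta$ to $\mu$-variables) are generated by: (var) $x:\rho\in\Gamma \Rightarrow \Gamma;\Delta\vdash x:\rho$; (lambda) $\Gamma,x:\sigma;\Delta\vdash t:\tau \Rightarrow \Gamma;\Delta\vdash\lambda x{:}\sigma.t:\sigma\to\tau$; (app) $\Gamma;\Delta\vdash t:\sigma\to\tau$ and $\Gamma;\Delta\vdash s:\sigma$ $\Rightarrow \Gamma;\Delta\vdash ts:\tau$; (zero) $\Gamma;\Delta\vdash 0:\mathbb{N}$; (suc) $\Gamma;\Delta\vdash t:\mathbb{N}\Rightarrow\Gamma;\Delta\vdash \mathsf{S}\,t:\mathbb{N}$; (nrec) $\Gamma;\Delta\vdash r:\rho$, $\Gamma;\Delta\vdash s:\mathbb{N}\to\rho\to\rho$, $\Gamma;\Delta\vdash t:\mathbb{N}$ $\Rightarrow \Gamma;\Delta\vdash\mathsf{nrec}_\rho\ r\ s\ t:\rho$; (activate) $\Gamma;\Delta,\alpha:\rho\vdash c\Rightarrow\Gamma;\Delta\vdash\mu\alpha{:}\rho.c:\rho$; (passivate) $\Gamma;\Delta\vdash t:\rho$ and $\alpha:\rho\in\Delta$ $\Rightarrow \Gamma;\Delta\vdash[\alpha]t$. Reduction $\to$ is the compatible closure (on terms and commands) of: ($\beta$) $(\lambda x.t)r\to t[x:=r]$; ($\mu\mathsf{S}$) $\mathsf{S}(\mu\alpha.c)\to\mu\alpha.c[\alpha:=\alpha(\mathsf{S}\,\Box)]$;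 ($\mu R$) $(\mu\alpha.c)s\to\mu\alpha.c[\alpha:=\alpha(\Box\,s)]$; ($\mu\eta$) $\mu\alpha.[\alpha]t\to t$ if $\alpha\notin FCV(t)$; ($\mu i$) $[\alpha]\mu\beta.c\to c[\beta:=\alpha\,\Box]$; ($0$) $\mathsf{nrec}\ r\ s\ 0\to r$; ($\mathsf{S}$) $\mathsf{nrec}\ r\ s\ (\mathsf{S}\,\underline{n})\to s\ \underline{n}\ (\mathsf{nrec}\ r\ s\ \underline{n})$; ($\mu\mathbb{N}$) $\mathsf{nrec}\ r\ s\ (\mu\alpha.c)\to\mu\alpha.c[\alpha:=\alpha(\mathsf{nrec}\ r\ s\ \Box)]$. A term is in normal form if no $\to$-step applies to it. Values are defined by $v,w ::= 0 \mid \mathsf{S}\,v \mid \lambda x.r$. *)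

theory Defs
  imports Main
begin

text \<open>The calculus lambda-mu-T, formalised with de Bruijn indices for both
  lambda-variables and mu-variables (so terms are identified up to renaming of
  bound variables by construction).  Lambda-variables and mu-variables live in
  two separate index spaces.\<close>

datatype ty = N | Arr ty ty

datatype trm =
    Var nat
  | Lam ty trm
  | App trm trm
  | Mu ty cmd
  | Zero
  | Sc trm
  | Nrec ty trm trm trm
and cmd =
    Pass nat trm               \<comment> \<open>[\<alpha>]t, \<alpha> a mu-variable (de Bruijn index)\<close>

primrec num :: "nat \<Rightarrow> trm" where
  "num 0 = Zero"
| "num (Suc n) = Sc (num n)"

definition liftf :: "(nat \<Rightarrow> nat) \<Rightarrow> nat \<Rightarrow> nat" where
  "liftf f i = (case i of 0 \<Rightarrow> 0 | Suc n \<Rightarrow> Suc (f n))"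

primrec renT :: "(nat \<Rightarrow> nat) \<Rightarrow> trm \<Rightarrow> trm"
  and renTc :: "(nat \<Rightarrow> nat) \<Rightarrow> cmd \<Rightarrow> cmd" where
  "renT f (Var i) = Var (f i)"
| "renT f (Lam \<rho> t) = Lam \<rho> (renT (liftf f) t)"
| "renT f (App t s) = App (renT f t) (renT f s)"
| "renT f (Mu \<rho> c) = Mu \<rho> (renTc f c)"
| "renT f Zero = Zero"
| "renT f (Sc t) = Sc (renT f t)"
| "renT f (Nrec \<rho> r s t) = Nrec \<rho> (renT f r) (renT f s) (renT f t)"
| "renTc f (Pass a t) = Pass a (renT f t)"

primrec renM :: "(nat \<Rightarrow> nat) \<Rightarrow> trm \<Rightarrow> trm"
  and renMc :: "(nat \<Rightarrow> nat) \<Rightarrow> cmd \<Rightarrow> cmd" where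
  "renM f (Var i) = Var i"
| "renM f (Lam \<rho> t) = Lam \<rho> (renM f t)"
| "renM f (App t s) = App (renM f t) (renM f s)"
| "renM f (Mu \<rho> c) = Mu \<rho> (renMc (liftf f) c)"
| "renM f Zero = Zero"
| "renM f (Sc t) = Sc (renM f t)"
| "renM f (Nrec \<rho> r s t) = Nrec \<rho> (renM f r) (renM f s) (renM f t)"
| "renMc f (Pass a t) = Pass (f a) (renM f t)"

primrec freeM :: "nat \<Rightarrow> trm \<Rightarrow> bool"
  and freeMc :: "nat \<Rightarrow> cmd \<Rightarrow> bool" where
  "freeM k (Var i) = False"
| "freeM k (Lam \<rho> t) = freeM k t"
| "freeM k (App t s) = (freeM k t \<or> freeM k s)"
| "freeM k (Mu \<rho> c) = freeMc (Suc k) c"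
| "freeM k Zero = False"
| "freeM k (Sc t) = freeM k t"
| "freeM k (Nrec \<rho> r s t) = (freeM k r \<or> freeM k s \<or> freeM k t)"
| "freeMc k (Pass a t) = (a = k \<or> freeM k t)"

primrec substT :: "(nat \<Rightarrow> trm) \<Rightarrow> trm \<Rightarrow> trm"
  and substTc :: "(nat \<Rightarrow> trm) \<Rightarrow> cmd \<Rightarrow> cmd" where
  "substT \<sigma> (Var i) = \<sigma> i"
| "substT \<sigma> (Lam \<rho> t) =
     Lam \<rho> (substT (\<lambda>i. case i of 0 \<Rightarrow> Var 0 | Suc n \<Rightarrow> renT Suc (\<sigma> n)) t)"
| "substT \<sigma> (App t s) = App (substT \<sigma> t) (substT \<sigma> s)"
| "substT \<sigma> (Mu \<rho> c) = Mu \<rho> (substTc (\<lambda>i. renM Suc (\<sigma> i)) c)"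
| "substT \<sigma> Zero = Zero"
| "substT \<sigma> (Sc t) = Sc (substT \<sigma> t)"
| "substT \<sigma> (Nrec \<rho> r s t) = Nrec \<rho> (substT \<sigma> r) (substT \<sigma> s) (substT \<sigma> t)"
| "substTc \<sigma> (Pass a t) = Pass a (substT \<sigma> t)"

definition subst0 :: "trm \<Rightarrow> trm \<Rightarrow> trm" where
  "subst0 t r = substT (\<lambda>i. case i of 0 \<Rightarrow> r | Suc n \<Rightarrow> Var n) t"

datatype ctx = Hole | CApp ctx trm | CSuc ctx | CNrec ty trm trm ctx

primrec fill :: "ctx \<Rightarrow> trm \<Rightarrow> trm" where
  "fill Hole u = u"
| "fill (CApp E s) u = App (fill E u) s"
| "fill (CSuc E) u = Sc (fill E u)"
| "fill (CNrec \<rho> r s E) u = Nrec \<rho> r s (fill E u)"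

primrec renTctx :: "(nat \<Rightarrow> nat) \<Rightarrow> ctx \<Rightarrow> ctx" where
  "renTctx f Hole = Hole"
| "renTctx f (CApp E s) = CApp (renTctx f E) (renT f s)"
| "renTctx f (CSuc E) = CSuc (renTctx f E)"
| "renTctx f (CNrec \<rho> r s E) = CNrec \<rho> (renT f r) (renT f s) (renTctx f E)"

primrec renMctx :: "(nat \<Rightarrow> nat) \<Rightarrow> ctx \<Rightarrow> ctx" where
  "renMctx f Hole = Hole"
| "renMctx f (CApp E s) = CApp (renMctx f E) (renM f s)"
| "renMctx f (CSuc E) = CSuc (renMctx f E)"
| "renMctx f (CNrec \<rho> r s E) = CNrec \<rho> (renM f r) (renM f s) (renMctx f E)"

text \<open>Structural substitution t[\<alpha>:=\<alpha> E], where \<alpha> is the mu-variable with index k: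
  every command [\<alpha>]u becomes [\<alpha>]E[u[\<alpha>:=\<alpha> E]].\<close>
primrec sst :: "nat \<Rightarrow> ctx \<Rightarrow> trm \<Rightarrow> trm"
  and sstc :: "nat \<Rightarrow> ctx \<Rightarrow> cmd \<Rightarrow> cmd" where
  "sst k E (Var i) = Var i"
| "sst k E (Lam \<rho> t) = Lam \<rho> (sst k (renTctx Suc E) t)"
| "sst k E (App t s) = App (sst k E t) (sst k E s)"
| "sst k E (Mu \<rho> c) = Mu \<rho> (sstc (Suc k) (renMctx Suc E) c)"
| "sst k E Zero = Zero"
| "sst k E (Sc t) = Sc (sst k E t)"
| "sst k E (Nrec \<rho> r s t) = Nrec \<rho> (sst k E r) (sst k E s) (sst k E t)"
| "sstc k E (Pass a t) =
     (if a = k then Pass a (fill E (sst k E t)) else Pass a (sst k E t))"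

text \<open>Typing: \<Gamma>;\<Delta> \<turnstile> t : \<rho> and \<Gamma>;\<Delta> \<turnstile> c, contexts as lists indexed by de Bruijn indices\<close>
inductive typing :: "ty list \<Rightarrow> ty list \<Rightarrow> trm \<Rightarrow> ty \<Rightarrow> bool"
  and typingc :: "ty list \<Rightarrow> ty list \<Rightarrow> cmd \<Rightarrow> bool" where
  t_var: "i < length \<Gamma> \<Longrightarrow> \<Gamma> ! i = \<rho> \<Longrightarrow> typing \<Gamma> \<Delta> (Var i) \<rho>"
| t_lam: "typing (\<sigma> # \<Gamma>) \<Delta> t \<tau> \<Longrightarrow> typing \<Gamma> \<Delta> (Lam \<sigma> t) (Arr \<sigma> \<tau>)"
| t_app: "typing \<Gamma> \<Delta> t (Arr \<sigma> \<tau>) \<Longrightarrow> typing \<Gamma> \<Delta> s \<sigma> \<Longrightarrow> typing \<Gamma> \<Delta> (App t s) \<tau>"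
| t_zero: "typing \<Gamma> \<Delta> Zero N"
| t_suc: "typing \<Gamma> \<Delta> t N \<Longrightarrow> typing \<Gamma> \<Delta> (Sc t) N"
| t_nrec: "typing \<Gamma> \<Delta> r \<rho> \<Longrightarrow> typing \<Gamma> \<Delta> s (Arr N (Arr \<rho> \<rho>)) \<Longrightarrow> typing \<Gamma> \<Delta> t N
           \<Longrightarrow> typing \<Gamma> \<Delta> (Nrec \<rho> r s t) \<rho>"
| t_mu: "typingc \<Gamma> (\<rho> # \<Delta>) c \<Longrightarrow> typing \<Gamma> \<Delta> (Mu \<rho> c) \<rho>"
| t_pass: "typing \<Gamma> \<Delta> t \<rho> \<Longrightarrow> a < length \<Delta> \<Longrightarrow> \<Delta> ! a = \<rho> \<Longrightarrow> typingc \<Gamma> \<Delta> (Pass a t)"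

inductive red :: "trm \<Rightarrow> trm \<Rightarrow> bool"
  and redc :: "cmd \<Rightarrow> cmd \<Rightarrow> bool" where
  r_beta: "red (App (Lam \<rho> t) r) (subst0 t r)"
| r_muS: "red (Sc (Mu \<rho> c)) (Mu \<rho> (sstc 0 (CSuc Hole) c))"
| r_muR: "red (App (Mu (Arr \<sigma> \<tau>) c) s) (Mu \<tau> (sstc 0 (CApp Hole (renM Suc s)) c))"
| r_muEta: "\<not> freeM 0 t \<Longrightarrow> red (Mu \<rho> (Pass 0 t)) (renM (\<lambda>i. i - 1) t)"
| r_muI: "redc (Pass a (Mu \<rho> c)) (renMc (\<lambda>i. case i of 0 \<Rightarrow> a | Suc n \<Rightarrow> n) c)"
| r_zero: "red (Nrec \<rho> r s Zero) r"
| r_suc: "red (Nrec \<rho> r s (Sc (num n))) (App (App s (num n)) (Nrec \<rho> r s (num n)))"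
| r_muN: "red (Nrec \<rho> r s (Mu \<sigma> c))
            (Mu \<rho> (sstc 0 (CNrec \<rho> (renM Suc r) (renM Suc s) Hole) c))"
| c_lam: "red t t' \<Longrightarrow> red (Lam \<rho> t) (Lam \<rho> t')"
| c_appL: "red t t' \<Longrightarrow> red (App t s) (App t' s)"
| c_appR: "red s s' \<Longrightarrow> red (App t s) (App t s')"
| c_mu: "redc c c' \<Longrightarrow> red (Mu \<rho> c) (Mu \<rho> c')"
| c_suc: "red t t' \<Longrightarrow> red (Sc t) (Sc t')"
| c_nrec1: "red r r' \<Longrightarrow> red (Nrec \<rho> r s t) (Nrec \<rho> r' s t)"
| c_nrec2: "red s s' \<Longrightarrow> red (Nrec \<rho> r s t) (Nrec \<rho> r s' t)"
| c_nrec3: "red t t' \<Longrightarrow> red (Nrec \<rho> r s t) (Nrec \<rho> r s t')"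
| c_pass: "red t t' \<Longrightarrow> redc (Pass a t) (Pass a t')"

definition normal :: "trm \<Rightarrow> bool" where
  "normal t \<longleftrightarrow> (\<nexists>u. red t u)"

inductive is_value :: "trm \<Rightarrow> bool" where
  "is_value Zero"
| "is_value v \<Longrightarrow> is_value (Sc v)"
| "is_value (Lam \<rho> r)"

end

theory Submission
  imports Defs
begin

(* The argument is the usual progress argument by induction on
   the typing derivation:
   - normality is inherited by the subterm in evaluation position of an
     application, a successor, a recursor and the body of a mu-abstraction;
   - by induction hypothesis that subterm is canonical, i.e. a value or of the
     form mu a.[b]v; a mu-term in evaluation position always creates a redex
     (rules muR, muS, muN, mu-i), so it must be a value;
   - canonical forms (values of type N are numerals, values of arrow type are
     lambda-abstractions) then exhibit a beta-, 0- or S-redex in the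
     elimination cases, contradicting normality.
   Closedness (Gamma = []) is what excludes variables. *)

definition canonical :: "trm \<Rightarrow> bool" where
  "canonical t \<longleftrightarrow> is_value t \<or> (\<exists>\<sigma> \<beta> v. t = Mu \<sigma> (Pass \<beta> v) \<and> is_value v)"

lemma canonical_not_value_Mu:
  assumes "canonical t" and "\<not> is_value t"
  obtains \<sigma> c where "t = Mu \<sigma> c"
  using assms unfolding canonical_def by blast

lemma normal_App_fun: "normal (App t s) \<Longrightarrow> normal t"
  unfolding normal_def by (meson c_appL)

lemma normal_Sc_arg: "normal (Sc t) \<Longrightarrow> normal t"
  unfolding normal_def by (meson c_suc)

lemma normal_Nrec_arg: "normal (Nrec \<rho> r s t) \<Longrightarrow> normal t"
  unfolding normal_def by (meson c_nrec3)

lemma normal_Mu_body: "normal (Mu \<rho> (Pass a u)) \<Longrightarrow> normal u"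
  unfolding normal_def by (meson c_mu c_pass)

lemma not_normal_beta: "\<not> normal (App (Lam \<sigma> r) s)"
  unfolding normal_def by (blast intro: r_beta)

lemma not_normal_muR: "\<not> normal (App (Mu (Arr \<sigma> \<tau>) c) s)"
  unfolding normal_def by (blast intro: r_muR)

lemma not_normal_muS: "\<not> normal (Sc (Mu \<sigma> c))"
  unfolding normal_def by (blast intro: r_muS)

lemma not_normal_nrec_num: "\<not> normal (Nrec \<rho> r s (num n))"
proof (cases n)
  case 0
  then show ?thesis unfolding normal_def by (auto intro: r_zero)
next
  case (Suc m)
  then show ?thesis unfolding normal_def by (auto intro: r_suc)
qed

lemma not_normal_muN: "\<not> normal (Nrec \<rho> r s (Mu \<sigma> c))"
  unfolding normal_def by (blast intro: r_muN)

lemma not_normal_muI: "\<not> normal (Mu \<rho> (Pass a (Mu \<sigma> c)))"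
  unfolding normal_def by (blast intro: r_muI c_mu)

lemma value_N_num: "is_value v \<Longrightarrow> typing \<Gamma> \<Delta> v N \<Longrightarrow> \<exists>n. v = num n"
proof (induction rule: is_value.induct)
  case 1
  have "Zero = num 0" by simp
  then show ?case by blast
next
  case (2 v)
  from \<open>typing \<Gamma> \<Delta> (Sc v) N\<close> have "typing \<Gamma> \<Delta> v N"
    by (cases rule: typing.cases) auto
  with 2 obtain n where "v = num n" by blast
  then have "Sc v = num (Suc n)" by simp
  then show ?case by blast
next
  case (3 \<rho> r)
  then show ?case by (auto elim: typing.cases)
qed

lemma value_Arr_Lam: "is_value v \<Longrightarrow> typing \<Gamma> \<Delta> v (Arr \<sigma> \<tau>) \<Longrightarrow> \<exists>r. v = Lam \<sigma> r"
  by (induction rule: is_value.induct) (auto elim: typing.cases)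

lemma typing_Mu_annot: "typing \<Gamma> \<Delta> (Mu \<sigma> c) \<rho> \<Longrightarrow> \<sigma> = \<rho>"
  by (auto elim: typing.cases)

lemma closed_normal_canonical:
  "typing \<Gamma> \<Delta> t \<rho> \<Longrightarrow> \<Gamma> = [] \<Longrightarrow> normal t \<Longrightarrow> canonical t"
  "typingc \<Gamma> \<Delta> c \<Longrightarrow> \<Gamma> = [] \<Longrightarrow>
     (case c of Pass a u \<Rightarrow> normal u \<longrightarrow> canonical u)"
proof (induction rule: typing_typingc.inducts)
  case (t_var i \<Gamma> \<rho> \<Delta>)
  then show ?case by simp
next
  case (t_lam \<sigma> \<Gamma> \<Delta> t \<tau>)
  then show ?case by (simp add: canonical_def is_value.intros)
next
  case (t_app \<Gamma> \<Delta> t \<sigma> \<tau> s)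
  have "canonical t" using t_app normal_App_fun by blast
  show ?case
  proof (cases "is_value t")
    case True
    then obtain r where "t = Lam \<sigma> r" using value_Arr_Lam t_app.hyps(1) by blast
    then show ?thesis using t_app.prems(2) not_normal_beta by simp
  next
    case False
    then obtain \<sigma>' c where t: "t = Mu \<sigma>' c"
      using \<open>canonical t\<close> canonical_not_value_Mu by blast
    then have "\<sigma>' = Arr \<sigma> \<tau>" using t_app.hyps(1) typing_Mu_annot by blast
    then show ?thesis using t_app.prems(2) t not_normal_muR by simp
  qed
next
  case (t_zero \<Gamma> \<Delta>)
  then show ?case by (simp add: canonical_def is_value.intros)
next
  case (t_suc \<Gamma> \<Delta> t)
  have "canonical t" using t_suc normal_Sc_arg by blast
  show ?case
  proof (cases "is_value t")
    case True
    then show ?thesis by (simp add: canonical_def is_value.intros)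
  next
    case False
    then obtain \<sigma> c where "t = Mu \<sigma> c"
      using \<open>canonical t\<close> canonical_not_value_Mu by blast
    then show ?thesis using t_suc.prems(2) not_normal_muS by simp
  qed
next
  case (t_nrec \<Gamma> \<Delta> r \<rho> s t)
  have "canonical t" using t_nrec normal_Nrec_arg by blast
  show ?case
  proof (cases "is_value t")
    case True
    then obtain n where "t = num n" using value_N_num t_nrec.hyps(3) by blast
    then show ?thesis using t_nrec.prems(2) not_normal_nrec_num by simp
  next
    case False
    then obtain \<sigma> c where "t = Mu \<sigma> c"
      using \<open>canonical t\<close> canonical_not_value_Mu by blast
    then show ?thesis using t_nrec.prems(2) not_normal_muN by simp
  qed
next
  case (t_mu \<Gamma> \<rho> \<Delta> c)
  obtain a u where c: "c = Pass a u" by (cases c)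
  have "canonical u" using t_mu c normal_Mu_body by simp
  show ?case
  proof (cases "is_value u")
    case True
    then show ?thesis using c by (auto simp: canonical_def)
  next
    case False
    then obtain \<sigma> c' where "u = Mu \<sigma> c'"
      using \<open>canonical u\<close> canonical_not_value_Mu by blast
    then show ?thesis using t_mu.prems(2) c not_normal_muI by simp
  qed
next
  case (t_pass \<Gamma> \<Delta> t \<rho> a)
  then show ?case by simp
qed

theorem mainTheorem2:
  fixes t :: trm and \<Delta> :: "ty list" and \<rho> :: ty
  assumes "normal t"
    and "typing [] \<Delta> t \<rho>"
  shows "is_value t \<or> (\<exists>\<sigma> \<beta> v. t = Mu \<sigma> (Pass \<beta> v) \<and> is_value v)"
  using closed_normal_canonical(1)[OF assms(2) refl assms(1)]
  unfolding canonical_def .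

end
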